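(* Let $\mathbf a=(a_i)_{i\ge0}$ be the fixed point beginning with $0$ of the $3$-uniform morphism $\sigma$ on $\{0,1,2\}$ defined by $\sigma(0)=010$, $\sigma(1)=102$, $\sigma(2)=122$, with letters viewed as elements of $\mathbb{F}_3$, and let $f_{\mathbf a}(T)=\sum_{i\ge0}a_iT^{-i}\in\mathbb{F}_3[[T^{-1}]]$. Then $$2.66\le\mu(f_{\mathbf a})\le2.81.$$
   Context: The fixed point is $\sigma^\infty(0)=\lim_n\sigma^n(0)=010102010\cdots$. Fix a real $|T|>1$; $|g|=|T|^{-i_0}$ for $g\in\mathbb{F}_3((T^{-1}))$ with leading term $T^{-i_0}$. The irrationality exponent $\mu(f)$ is the supremum of real $\tau$ such that $|f-P/Q|<|Q|^{-\tau}$ has infinitely many solutions $(P,Q)\in\mathbb{F}_3[T]^2$, $Q\ne0$. *)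

theory Defs
  imports "HOL-Computational_Algebra.Formal_Laurent_Series"
          "HOL-Computational_Algebra.Polynomial"
          "HOL-Library.Extended_Real"
          "Berlekamp_Zassenhaus.Finite_Field"
begin

text \<open>A three-element index type; F_3 is the library field  three mod_ring.\<close>
datatype three = Three0 | Three1 | Three2

lemma UNIV_three: "(UNIV :: three set) = {Three0, Three1, Three2}"
  using three.exhaust by auto

instance three :: finite
  by standard (simp add: UNIV_three)

lemma card_three: "CARD(three) = 3"
  by (simp add: UNIV_three)

instance three :: prime_card
  by standard (simp add: card_three)

type_synonym F3 = "three mod_ring"

fun sigma :: "nat \<Rightarrow> nat list" where
  "sigma 0 = [0, 1, 0]"
| "sigma (Suc 0) = [1, 0, 2]"
| "sigma _ = [1, 2, 2]"

definition sigma_word :: "nat list \<Rightarrow> nat list" where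
  "sigma_word w = concat (map sigma w)"

text \<open>The fixed point sigma^infinity(0) = lim sigma^n(0): its i-th letter is the i-th letter
  of sigma^(i+1)(0), a word of length 3^(i+1) > i which is a prefix of all later iterates.\<close>
definition fixpt :: "nat \<Rightarrow> nat" where
  "fixpt i = ((sigma_word ^^ Suc i) [0]) ! i"

text \<open>An element  sum_k c_k T^k  of F_3((T^-1)) is represented by the formal Laurent
  series  sum_k c_k X^(-k)  (finitely many negative powers of X).\<close>

definition poly_T :: "F3 poly \<Rightarrow> F3 fls" where
  "poly_T P = Abs_fls (\<lambda>k. if k \<le> 0 then Polynomial.coeff P (nat (- k)) else 0)"

definition f_a :: "F3 fls" where
  "f_a = fps_to_fls (Abs_fps (\<lambda>i. of_nat (fixpt i)))"

text \<open>|g| = t^(-i0) where T^(-i0) is the leading term of g (i0 = subdegree in X); |0| = 0.\<close>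
definition absT :: "real \<Rightarrow> F3 fls \<Rightarrow> real" where
  "absT t g = (if g = 0 then 0 else t powr (- real_of_int (fls_subdegree g)))"

definition irr_exp :: "real \<Rightarrow> F3 fls \<Rightarrow> ereal" where
  "irr_exp t f = Sup (ereal ` {\<tau>. infinite {(P, Q). Q \<noteq> 0 \<and>
      absT t (f - poly_T P / poly_T Q) < absT t (poly_T Q) powr (- \<tau>)}})"

end

theory Submission
  imports Defs
begin

text \<open>
  Write a for the fixed point, q_N = T^N - 1 and p_N for the polynomial part of T^N f_a, so that
  q_N f_a - p_N = sum_(m > 0) (a_(m+N) - a_m) T^(-m). For N = 6*3^k the word a has period N on
  its prefix of length 16*3^k and no further, so this error has valuation exactly 10*3^k and
  |f_a - p_N/q_N| = |q_N|^(-8/3); hence mu >= 8/3. Over F_3 we have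
  q_N = ((T - 1)(T + 1))^(3^(k+1)), and the partial sums of a, computed modulo 3, show that
  p_N(1) and p_N(-1) are nonzero, so p_N and q_N are coprime.

  For the upper bound let |f_a - P/Q| < |Q|^(-tau) with tau > 14/5 and
  10*3^k <= deg Q < 30*3^k, and compare with p/q = p_N/q_N for N = 18*3^k. The polynomial
  pQ - Pq = q (Q f_a - P) - Q (q f_a - p) would contain only negative powers of T, so it
  vanishes; by coprimality q divides Q, which pins the valuation of Q f_a - P down to
  48*3^k - deg Q, too small for tau > 8/3. Hence deg Q < 10, leaving finitely many (P, Q).
\<close>

unbundle fps_syntax

section \<open>The fixed point of sigma\<close>

lemma length_sigma [simp]: "length (sigma x) = 3"
  by (cases x rule: sigma.cases) auto

lemma sigma_1_2 [simp]: "sigma 1 = [1, 0, 2]" "sigma 2 = [1, 2, 2]"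
  by (simp_all add: numeral_2_eq_2)

lemma sigma_word_Nil [simp]: "sigma_word [] = []"
  by (simp add: sigma_word_def)

lemma sigma_word_Cons [simp]: "sigma_word (x # w) = sigma x @ sigma_word w"
  by (simp add: sigma_word_def)

lemma length_sigma_word [simp]: "length (sigma_word w) = 3 * length w"
  by (induct w) auto

lemma nth_sigma_word:
  "i < length w \<Longrightarrow> j < 3 \<Longrightarrow> sigma_word w ! (3 * i + j) = sigma (w ! i) ! j"
proof (induct w arbitrary: i)
  case (Cons x w)
  then show ?case
    by (cases i) (auto simp: nth_append)
qed simp

lemma length_sigma_word_iterate [simp]: "length ((sigma_word ^^ k) [0]) = 3 ^ k"
  by (induct k) auto

lemma nth_sigma_word_iterate_Suc:
  "i < 3 ^ k \<Longrightarrow> (sigma_word ^^ Suc k) [0] ! i = (sigma_word ^^ k) [0] ! i"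
proof (induct k arbitrary: i)
  case (Suc k)
  obtain q j where i: "i = 3 * q + j" and j: "j < 3" and q: "q < 3 ^ k"
    using Suc.prems by (intro that[of "i div 3" "i mod 3"]) auto
  have "(sigma_word ^^ Suc (Suc k)) [0] ! i = sigma_word ((sigma_word ^^ Suc k) [0]) ! (3 * q + j)"
    unfolding i by simp
  also have "\<dots> = sigma ((sigma_word ^^ Suc k) [0] ! q) ! j"
    using q j by (intro nth_sigma_word) auto
  also have "\<dots> = sigma ((sigma_word ^^ k) [0] ! q) ! j"
    using Suc.hyps q by simp
  also have "\<dots> = sigma_word ((sigma_word ^^ k) [0]) ! (3 * q + j)"
    using q j by (intro nth_sigma_word[symmetric]) auto
  also have "\<dots> = (sigma_word ^^ Suc k) [0] ! i"
    unfolding i by simp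
  finally show ?case .
qed simp

lemma less_pow3_Suc: "i < (3::nat) ^ Suc i"
proof -
  have "i < 2 ^ i" by (rule less_exp)
  also have "\<dots> \<le> 3 ^ i" by (rule power_mono) simp_all
  also have "\<dots> \<le> 3 ^ Suc i" by simp
  finally show ?thesis .
qed

lemma nth_sigma_word_iterate_mono:
  assumes "i < 3 ^ k" "k \<le> m"
  shows "(sigma_word ^^ m) [0] ! i = (sigma_word ^^ k) [0] ! i"
  using assms(2)
proof (induct m rule: dec_induct)
  case (step m)
  have "i < 3 ^ m"
    using assms(1) \<open>k \<le> m\<close> by (meson less_le_trans one_le_numeral power_increasing)
  then show ?case
    using step.hyps(3) by (rule nth_sigma_word_iterate_Suc[THEN trans])
qed simp

lemma fixpt_eq_nth_iterate: "i < 3 ^ k \<Longrightarrow> fixpt i = (sigma_word ^^ k) [0] ! i"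
proof -
  assume i: "i < 3 ^ k"
  show ?thesis
  proof (cases "k \<le> Suc i")
    case True
    show ?thesis
      unfolding fixpt_def by (rule nth_sigma_word_iterate_mono[OF i True])
  next
    case False
    then show ?thesis
      unfolding fixpt_def using less_pow3_Suc by (intro nth_sigma_word_iterate_mono[symmetric]) auto
  qed
qed

lemma fixpt_mult3_add: "j < 3 \<Longrightarrow> fixpt (3 * i + j) = sigma (fixpt i) ! j"
proof -
  assume j: "j < 3"
  have i: "i < 3 ^ Suc i"
    by (rule less_pow3_Suc)
  then have "3 * i + j < 3 ^ Suc (Suc i)"
    using j by simp
  then have "fixpt (3 * i + j) = (sigma_word ^^ Suc (Suc i)) [0] ! (3 * i + j)"
    by (rule fixpt_eq_nth_iterate)
  also have "\<dots> = sigma_word ((sigma_word ^^ Suc i) [0]) ! (3 * i + j)"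
    by simp
  also have "\<dots> = sigma ((sigma_word ^^ Suc i) [0] ! i) ! j"
    using i j by (intro nth_sigma_word) auto
  also have "\<dots> = sigma (fixpt i) ! j"
    by (simp only: fixpt_eq_nth_iterate[OF i])
  finally show ?thesis .
qed

lemma fixpt_0 [simp]: "fixpt 0 = 0"
  by (simp add: fixpt_def)

lemma fixpt_unfold: "0 < i \<Longrightarrow> fixpt i = sigma (fixpt (i div 3)) ! (i mod 3)"
  using fixpt_mult3_add[of "i mod 3" "i div 3"] by simp

lemma fixpt_table:
  "fixpt 1 = 1" "fixpt 2 = 0" "fixpt 3 = 1" "fixpt 4 = 0" "fixpt 5 = 2" "fixpt 6 = 0" "fixpt 7 = 1" "fixpt 8 = 0"
  "fixpt 9 = 1" "fixpt 10 = 0" "fixpt 11 = 2" "fixpt 12 = 0" "fixpt 13 = 1" "fixpt 14 = 0" "fixpt 15 = 1" "fixpt 16 = 2"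
proof -
  show 1: "fixpt 1 = 1" using fixpt_unfold[of 1] by simp
  show 2: "fixpt 2 = 0" using fixpt_unfold[of 2] by simp
  show 3: "fixpt 3 = 1" using fixpt_unfold[of 3] 1 by simp
  show 4: "fixpt 4 = 0" using fixpt_unfold[of 4] 1 by simp
  show 5: "fixpt 5 = 2" using fixpt_unfold[of 5] 1 by simp
  show 6: "fixpt 6 = 0" using fixpt_unfold[of 6] 2 by simp
  show 7: "fixpt 7 = 1" using fixpt_unfold[of 7] 2 by simp
  show 8: "fixpt 8 = 0" using fixpt_unfold[of 8] 2 by simp
  show 9: "fixpt 9 = 1" using fixpt_unfold[of 9] 3 by simp
  show 10: "fixpt 10 = 0" using fixpt_unfold[of 10] 3 by simp
  show 11: "fixpt 11 = 2" using fixpt_unfold[of 11] 3 by simp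
  show 12: "fixpt 12 = 0" using fixpt_unfold[of 12] 4 by simp
  show 13: "fixpt 13 = 1" using fixpt_unfold[of 13] 4 by simp
  show 14: "fixpt 14 = 0" using fixpt_unfold[of 14] 4 by simp
  show 15: "fixpt 15 = 1" using fixpt_unfold[of 15] 5 by simp
  show 16: "fixpt 16 = 2" using fixpt_unfold[of 16] 5 by simp
qed

lemma sigma_nth_less_3: "j < 3 \<Longrightarrow> sigma x ! j < 3"
  by (cases x rule: sigma.cases) (auto simp: less_Suc_eq numeral_3_eq_3)

lemma fixpt_less_3: "fixpt i < 3"
proof -
  have "fixpt (3 * (i div 3) + i mod 3) < 3"
    by (simp only: fixpt_mult3_add[of "i mod 3" "i div 3"] sigma_nth_less_3 mod_less_divisor zero_less_numeral)
  then show ?thesis by simp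
qed

lemma fixpt_mult3_eq_0_iff: "fixpt (3 * i) = 0 \<longleftrightarrow> fixpt i = 0"
  using fixpt_mult3_add[of 0 i] by (cases "fixpt i" rule: sigma.cases) auto

lemma fixpt_pow3_mult_eq_0_iff: "fixpt (3 ^ k * c) = 0 \<longleftrightarrow> fixpt c = 0"
  by (induct k) (simp_all add: mult.assoc fixpt_mult3_eq_0_iff)

lemma fixpt_period_mult3:
  assumes period: "\<And>m. m < r \<Longrightarrow> fixpt (m + N) = fixpt m" and "m < 3 * r"
  shows "fixpt (m + 3 * N) = fixpt m"
proof -
  obtain i j where m: "m = 3 * i + j" and j: "j < 3" and i: "i < r"
    using \<open>m < 3 * r\<close> by (intro that[of "m div 3" "m mod 3"]) auto
  have "fixpt (m + 3 * N) = fixpt (3 * (i + N) + j)"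
    by (simp add: m algebra_simps)
  also have "\<dots> = sigma (fixpt (i + N)) ! j"
    using j by (rule fixpt_mult3_add)
  also have "\<dots> = sigma (fixpt i) ! j"
    using period i by simp
  also have "\<dots> = fixpt m"
    using fixpt_mult3_add j m by simp
  finally show ?thesis .
qed

lemma fixpt_period: "m < 10 * 3 ^ k \<Longrightarrow> fixpt (m + 6 * 3 ^ k) = fixpt m"
proof (induct k arbitrary: m)
  case 0
  then have "m \<in> {0, 1, 2, 3, 4, 5, 6, 7, 8, 9}" by auto
  then show ?case
    using fixpt_table by (auto simp del: One_nat_def)
next
  case (Suc k)
  have "fixpt (m + 3 * (6 * 3 ^ k)) = fixpt m"
    by (rule fixpt_period_mult3[of "10 * 3 ^ k"]) (use Suc in auto)
  then show ?case
    by (simp add: ac_simps)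
qed

section \<open>Sums of letters modulo 3\<close>

lemma of_nat_F3_eq_iff: "(of_nat m :: F3) = of_nat n \<longleftrightarrow> m mod 3 = n mod 3"
  by (simp add: of_nat_eq_iff_cong_CHAR card_three cong_def)

lemma of_nat_F3_eq_0_iff: "(of_nat m :: F3) = 0 \<longleftrightarrow> 3 dvd m"
  using of_nat_F3_eq_iff[of m 0] by auto

lemma F3_three_eq_0: "(3 :: F3) = 0"
  using of_nat_F3_eq_0_iff[of 3] by simp

definition letter :: "nat \<Rightarrow> F3" where
  "letter i = of_nat (fixpt i)"

lemma letter_0 [simp]: "letter 0 = 0"
  by (simp add: letter_def)

lemma letter_triple_sum: "letter (3 * i) + letter (3 * i + 1) + letter (3 * i + 2) = 1 - letter i"
proof -
  have "(fixpt (3 * i) + fixpt (3 * i + 1) + fixpt (3 * i + 2) + fixpt i) mod 3 = 1 mod 3"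
    using fixpt_mult3_add[of 0 i] fixpt_mult3_add[of 1 i] fixpt_mult3_add[of 2 i] fixpt_less_3[of i]
    by (cases "fixpt i" rule: sigma.cases) auto
  then have "letter (3 * i) + letter (3 * i + 1) + letter (3 * i + 2) + letter i = 1"
    unfolding of_nat_F3_eq_iff[symmetric] by (simp add: letter_def)
  then show ?thesis by (simp add: eq_diff_eq)
qed

lemma letter_triple_alt_sum: "letter (3 * i) - letter (3 * i + 1) + letter (3 * i + 2) = letter i - 1"
proof -
  have "(fixpt (3 * i) + fixpt (3 * i + 2) + 1) mod 3 = (fixpt (3 * i + 1) + fixpt i) mod 3"
    using fixpt_mult3_add[of 0 i] fixpt_mult3_add[of 1 i] fixpt_mult3_add[of 2 i] fixpt_less_3[of i]
    by (cases "fixpt i" rule: sigma.cases) auto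
  then have sum: "letter (3 * i) + letter (3 * i + 2) + 1 = letter (3 * i + 1) + letter i"
    unfolding of_nat_F3_eq_iff[symmetric] by (simp add: letter_def ac_simps)
  have "letter (3 * i) - letter (3 * i + 1) + letter (3 * i + 2)
      = (letter (3 * i) + letter (3 * i + 2) + 1) - letter (3 * i + 1) - 1"
    by (simp add: algebra_simps)
  also have "\<dots> = letter i - 1"
    unfolding sum by simp
  finally show ?thesis .
qed

lemma sum_lessThan_mult3:
  fixes g :: "nat \<Rightarrow> 'a::comm_monoid_add"
  shows "(\<Sum>j<3 * M. g j) = (\<Sum>i<M. g (3 * i) + g (3 * i + 1) + g (3 * i + 2))"
proof (induct M)
  case (Suc M)
  have "3 * Suc M = Suc (Suc (Suc (3 * M)))" by simp
  then show ?case unfolding \<open>3 * Suc M = _\<close> using Suc by (simp add: algebra_simps)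
qed simp

lemma sum_neg_one_power_even: "(\<Sum>i<2 * n. (- 1 :: 'a::ring_1) ^ i) = 0"
proof (induct n)
  case (Suc n)
  have "2 * Suc n = Suc (Suc (2 * n))" by simp
  then show ?case using Suc by simp
qed simp

lemma sum_letters_mult3: "(\<Sum>j<3 * M. letter j) = of_nat M - (\<Sum>j<M. letter j)"
  unfolding sum_lessThan_mult3 letter_triple_sum by (simp add: sum_subtractf)

lemma alt_sum_letters_mult3:
  assumes "even M"
  shows "(\<Sum>j<3 * M. (- 1) ^ j * letter j) = (\<Sum>j<M. (- 1) ^ j * letter j)"
proof -
  obtain n where M: "M = 2 * n" using assms by blast
  have "(\<Sum>j<3 * M. (- 1) ^ j * letter j)
      = (\<Sum>i<M. (- 1) ^ i * (letter (3 * i) - letter (3 * i + 1) + letter (3 * i + 2)))"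
    unfolding sum_lessThan_mult3
  proof (rule sum.cong)
    fix i
    have "(- 1 :: F3) ^ (3 * i) = (- 1) ^ i"
      by (simp add: power_mult)
    then show "(- 1) ^ (3 * i) * letter (3 * i) + (- 1) ^ (3 * i + 1) * letter (3 * i + 1)
        + (- 1) ^ (3 * i + 2) * letter (3 * i + 2)
      = (- 1) ^ i * (letter (3 * i) - letter (3 * i + 1) + letter (3 * i + 2))"
      by (simp add: power_add algebra_simps)
  qed simp
  also have "\<dots> = (\<Sum>i<M. (- 1) ^ i * (letter i - 1))"
    unfolding letter_triple_alt_sum ..
  also have "\<dots> = (\<Sum>j<M. (- 1) ^ j * letter j)"
    using sum_neg_one_power_even[of n, where 'a=F3] unfolding M[symmetric]
    by (simp add: right_diff_distrib sum_subtractf)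
  finally show ?thesis .
qed

lemma sum_letters_six_pow3: "(\<Sum>j<6 * 3 ^ k. letter j) = (- 1) ^ k"
proof (induct k)
  case 0
  have "(\<Sum>j<3 * 2. letter j) = 1"
    unfolding sum_letters_mult3 by (simp add: lessThan_nat_numeral letter_def fixpt_table fixpt_table(1)[unfolded One_nat_def])
  then show ?case by simp
next
  case (Suc k)
  have "(of_nat (6 * 3 ^ k) :: F3) = 0"
    by (subst of_nat_F3_eq_0_iff) simp
  then show ?case
    using sum_letters_mult3[of "6 * 3 ^ k"] Suc by (simp add: ac_simps)
qed

lemma alt_sum_letters_two_pow3: "(\<Sum>j<2 * 3 ^ k. (- 1) ^ j * letter j) = - 1"
proof (induct k)
  case 0
  show ?case by (simp add: lessThan_nat_numeral letter_def fixpt_table fixpt_table(1)[unfolded One_nat_def])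
next
  case (Suc k)
  then show ?case
    using alt_sum_letters_mult3[of "2 * 3 ^ k"] by (simp add: ac_simps)
qed

definition approx_den :: "nat \<Rightarrow> F3 poly" where
  "approx_den N = Polynomial.monom 1 N - 1"

definition approx_num :: "nat \<Rightarrow> F3 poly" where
  "approx_num N = (\<Sum>j\<le>N. Polynomial.monom (letter j) (N - j))"

lemma degree_approx_den: "0 < N \<Longrightarrow> degree (approx_den N) = N"
proof -
  assume "0 < N"
  have "degree (Polynomial.monom (1 :: F3) N + (- 1)) = degree (Polynomial.monom (1 :: F3) N)"
    using \<open>0 < N\<close> by (intro degree_add_eq_left) (simp add: degree_monom_eq)
  then show ?thesis
    by (simp add: approx_den_def degree_monom_eq)
qed

lemma approx_den_nonzero: "0 < N \<Longrightarrow> approx_den N \<noteq> 0"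
  using degree_approx_den[of N] by (cases "approx_den N = 0") auto

lemma coeff_approx_num: "Polynomial.coeff (approx_num N) i = (if i \<le> N then letter (N - i) else 0)"
proof -
  have "Polynomial.coeff (approx_num N) i = (\<Sum>j\<le>N. if j = N - i \<and> i \<le> N then letter j else 0)"
    unfolding approx_num_def coeff_sum coeff_monom by (intro sum.cong) auto
  then show ?thesis by (simp add: sum.delta)
qed

lemma poly_approx_num: "poly (approx_num N) x = (\<Sum>j\<le>N. letter j * x ^ (N - j))"
  by (simp add: approx_num_def poly_sum poly_monom)

lemma sum_atMost_eq_lessThan_add:
  fixes g :: "nat \<Rightarrow> 'a::comm_monoid_add"
  shows "(\<Sum>j\<le>N. g j) = (\<Sum>j<N. g j) + g N"
  using sum.lessThan_Suc[of g N] by (simp only: lessThan_Suc_atMost)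

lemma coprime_linear_power:
  fixes p :: "'a::field_gcd poly"
  assumes "poly p c \<noteq> 0"
  shows "coprime ([:- c, 1:] ^ n) p"
proof -
  have "prime_elem [:- c, 1:]"
    by (rule prime_elem_linear_field_poly) simp
  moreover have "\<not> [:- c, 1:] dvd p"
    using assms by (simp add: poly_eq_0_iff_dvd)
  ultimately have "coprime [:- c, 1:] p"
    by (rule prime_elem_imp_coprime)
  then show ?thesis
    by (simp add: coprime_power_left_iff)
qed

lemma power3_diff_one_char3:
  fixes x :: "'a::comm_ring_1"
  assumes "(3 :: 'a) = 0"
  shows "(x - 1) ^ 3 = x ^ 3 - 1"
proof -
  have "(x - 1) ^ 3 = x ^ 3 - 1 - 3 * (x ^ 2 - x)"
    by (simp add: power3_eq_cube power2_eq_square algebra_simps)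
  then show ?thesis using assms by simp
qed

lemma approx_den_two_pow3: "approx_den (2 * 3 ^ n) = ([:- 1, 1:] * [:1, 1:]) ^ 3 ^ n"
proof (induct n)
  case 0
  have "[:- 1, 1:] * [:1, 1:] = Polynomial.monom (1 :: F3) 2 - 1"
    by (simp add: monom_altdef power2_eq_square one_pCons)
  then show ?case by (simp add: approx_den_def)
next
  case (Suc n)
  have three: "(3 :: F3 poly) = 0"
    by (simp add: numeral_poly F3_three_eq_0)
  have "approx_den (2 * 3 ^ Suc n) = approx_den (2 * 3 ^ n) ^ 3"
    unfolding approx_den_def power3_diff_one_char3[OF three] by (simp add: monom_power ac_simps)
  then show ?case
    unfolding Suc by (simp add: power_mult[symmetric] ac_simps)
qed

lemma coprime_approx_den_num: "coprime (approx_den (6 * 3 ^ k)) (approx_num (6 * 3 ^ k))"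
proof -
  define N :: nat where "N = 6 * 3 ^ k"
  have "letter N = 0"
    using fixpt_pow3_mult_eq_0_iff[of k 6] by (simp add: N_def letter_def ac_simps fixpt_table)
  then have "poly (approx_num N) 1 = (- 1) ^ k"
    using sum_letters_six_pow3[of k] by (simp add: poly_approx_num sum_atMost_eq_lessThan_add N_def[symmetric])
  then have "coprime ([:- 1, 1:] ^ 3 ^ Suc k) (approx_num N)"
    by (intro coprime_linear_power) simp
  moreover have "poly (approx_num N) (- 1) = - 1"
  proof -
    have "poly (approx_num N) (- 1) = (\<Sum>j\<le>N. (- 1) ^ j * letter j)"
      unfolding poly_approx_num
    proof (rule sum.cong)
      fix j assume "j \<in> {..N}"
      then have "even (N - j) \<longleftrightarrow> even j"
        by (auto simp: N_def)
      then show "letter j * (- 1) ^ (N - j) = (- 1) ^ j * letter j"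
        by (simp add: minus_one_power_iff)
    qed simp
    also have "\<dots> = - 1"
      using alt_sum_letters_two_pow3[of "Suc k"] \<open>letter N = 0\<close>
      by (simp add: sum_atMost_eq_lessThan_add N_def)
    finally show ?thesis .
  qed
  then have "coprime ([:- (- 1), 1:] ^ 3 ^ Suc k) (approx_num N)"
    by (intro coprime_linear_power) simp
  ultimately have "coprime (([:- 1, 1:] * [:1, 1:]) ^ 3 ^ Suc k) (approx_num N)"
    unfolding power_mult_distrib coprime_mult_left_iff by simp
  moreover have "N = 2 * 3 ^ Suc k"
    by (simp add: N_def)
  ultimately show ?thesis
    unfolding N_def[symmetric] by (simp only: approx_den_two_pow3)
qed

section \<open>Polynomials in T as Laurent series in T^-1\<close>

lemma poly_T_nth: "poly_T P $$ k = (if k \<le> 0 then Polynomial.coeff P (nat (- k)) else 0)"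
  unfolding poly_T_def
  by (rule nth_Abs_fls_lower_bound[of "- int (degree P)"]) (auto simp: coeff_eq_0)

lemma poly_T_0 [simp]: "poly_T 0 = 0"
  by (rule fls_eqI) (simp add: poly_T_nth)

lemma poly_T_add: "poly_T (p + q) = poly_T p + poly_T q"
  by (rule fls_eqI) (simp add: poly_T_nth)

lemma poly_T_diff: "poly_T (p - q) = poly_T p - poly_T q"
  by (rule fls_eqI) (simp add: poly_T_nth)

lemma poly_T_smult: "poly_T (Polynomial.smult a p) = fls_const a * poly_T p"
  by (rule fls_eqI) (simp add: poly_T_nth)

lemma poly_T_const: "poly_T [:a:] = fls_const a"
  by (rule fls_eqI) (auto simp: poly_T_nth coeff_pCons split: nat.splits)

lemma poly_T_1 [simp]: "poly_T 1 = 1"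
  using poly_T_const[of 1] by (simp add: one_pCons)

lemma poly_T_pCons_0: "poly_T (pCons 0 p) = fls_X_inv * poly_T p"
  unfolding fls_X_inv_times_conv_shift
proof (rule fls_eqI)
  fix k :: int
  show "poly_T (pCons 0 p) $$ k = fls_shift 1 (poly_T p) $$ k"
  proof (cases "k < 0")
    case True
    then have "nat (- k) = Suc (nat (- (k + 1)))" by simp
    then show ?thesis using True by (simp add: poly_T_nth)
  qed (simp add: poly_T_nth)
qed

lemma poly_T_mult: "poly_T (p * q) = poly_T p * poly_T q"
proof (induct p)
  case (pCons a p)
  have "poly_T (pCons a p * q) = poly_T (Polynomial.smult a q + pCons 0 (p * q))"
    by simp
  also have "\<dots> = fls_const a * poly_T q + fls_X_inv * (poly_T p * poly_T q)"
    by (simp only: poly_T_add poly_T_smult poly_T_pCons_0 pCons(2))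
  also have "\<dots> = (poly_T [:a:] + poly_T (pCons 0 p)) * poly_T q"
    by (simp add: poly_T_const poly_T_pCons_0 algebra_simps)
  also have "\<dots> = poly_T (pCons a p) * poly_T q"
    by (simp flip: poly_T_add)
  finally show ?case .
qed simp

lemma poly_T_eq_0_iff [simp]: "poly_T p = 0 \<longleftrightarrow> p = 0"
proof
  assume "poly_T p = 0"
  then have "Polynomial.coeff p n = 0" for n
    using poly_T_nth[of p "- int n"] by simp
  then show "p = 0" by (simp add: poly_eq_iff)
qed simp

lemma poly_T_nth_degree: "poly_T p $$ (- int (degree p)) = lead_coeff p"
  by (simp add: poly_T_nth)

lemma fls_subdegree_poly_T: "fls_subdegree (poly_T p) = - int (degree p)"
proof (cases "p = 0")
  case False
  then show ?thesis
    by (intro fls_subdegree_eqI) (auto simp: poly_T_nth coeff_eq_0)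
qed simp

lemma nth_poly_T_mult_eq_0: "m + int (degree Q) < fls_subdegree g \<Longrightarrow> (poly_T Q * g) $$ m = 0"
  by (rule fls_times_nth_eq0) (simp add: fls_subdegree_poly_T)

lemma poly_T_monom_one: "poly_T (Polynomial.monom 1 N) = fls_shift (int N) 1"
  by (rule fls_eqI) (auto simp: poly_T_nth coeff_monom)

definition approx_err :: "nat \<Rightarrow> F3 fls" where
  "approx_err N = poly_T (approx_den N) * f_a - poly_T (approx_num N)"

lemma f_a_nth: "f_a $$ m = (if m < 0 then 0 else letter (nat m))"
  by (simp add: f_a_def letter_def)

lemma approx_err_nth: "approx_err N $$ m = (if 0 < m then letter (nat m + N) - letter (nat m) else 0)"
proof -
  have "approx_err N = fls_shift (int N) f_a - f_a - poly_T (approx_num N)"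
    unfolding approx_err_def approx_den_def poly_T_diff poly_T_monom_one
    by (simp add: algebra_simps fls_shifted_times_simps)
  then have "approx_err N $$ m = f_a $$ (m + int N) - f_a $$ m - poly_T (approx_num N) $$ m"
    by simp
  also have "\<dots> = (if 0 < m then letter (nat m + N) - letter (nat m) else 0)"
  proof (cases "0 < m")
    case True
    then show ?thesis by (simp add: f_a_nth poly_T_nth nat_add_distrib)
  next
    case False
    show ?thesis
    proof (cases "m + int N < 0")
      case False': False
      then have "nat (- m) \<le> N" and "N - nat (- m) = nat (m + int N)"
        using False by auto
      then show ?thesis
        using False False' by (simp add: f_a_nth poly_T_nth coeff_approx_num)
    qed (use False in \<open>simp add: f_a_nth poly_T_nth coeff_approx_num\<close>)
  qed
  finally show ?thesis .
qed

lemma approx_err_six_pow3: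
  "approx_err (6 * 3 ^ k) \<noteq> 0 \<and> fls_subdegree (approx_err (6 * 3 ^ k)) = 10 * 3 ^ k"
proof -
  define N :: nat where "N = 6 * 3 ^ k"
  define r :: nat where "r = 10 * 3 ^ k"
  have "fixpt r = 0"
    using fixpt_pow3_mult_eq_0_iff[of k 10] by (simp add: r_def ac_simps fixpt_table)
  moreover have "fixpt (r + N) \<noteq> 0"
    using fixpt_pow3_mult_eq_0_iff[of k 16] by (simp add: r_def N_def ac_simps fixpt_table)
  moreover have "0 < r"
    by (simp add: r_def)
  moreover have "letter (r + N) \<noteq> 0"
    using \<open>fixpt (r + N) \<noteq> 0\<close> fixpt_less_3[of "r + N"]
    by (auto simp: letter_def of_nat_F3_eq_0_iff dest: dvd_imp_le)
  ultimately have nonzero: "approx_err N $$ int r \<noteq> 0"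
    by (simp add: approx_err_nth letter_def)
  have below: "approx_err N $$ m = 0" if "m < int r" for m
  proof (cases "0 < m")
    case True
    then have "nat m < r"
      using that by (simp add: nat_less_iff)
    then show ?thesis
      using True fixpt_period[of "nat m" k] by (simp add: approx_err_nth letter_def r_def N_def)
  qed (simp add: approx_err_nth)
  have "fls_subdegree (approx_err N) = int r"
    by (rule fls_subdegree_eqI[OF nonzero below])
  then show ?thesis
    using nonzero unfolding N_def r_def by auto
qed

section \<open>Rational approximation in F_3((T^-1))\<close>

lemma absT_poly_T: "p \<noteq> 0 \<Longrightarrow> absT t (poly_T p) = t powr real (degree p)"
  by (simp add: absT_def fls_subdegree_poly_T)

lemma absT_approx_less_iff:
  fixes f :: "F3 fls" and P Q :: "F3 poly"
  assumes t: "1 < t" and Q: "Q \<noteq> 0"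
  shows "absT t (f - poly_T P / poly_T Q) < absT t (poly_T Q) powr (- \<tau>) \<longleftrightarrow>
    poly_T Q * f - poly_T P = 0 \<or>
    (\<tau> - 1) * real (degree Q) < real_of_int (fls_subdegree (poly_T Q * f - poly_T P))"
proof -
  define W where "W = poly_T Q * f - poly_T P"
  have "poly_T Q \<noteq> 0"
    using Q by simp
  then have approx: "f - poly_T P / poly_T Q = W / poly_T Q"
    unfolding W_def by (simp add: field_simps)
  have bound: "absT t (poly_T Q) powr (- \<tau>) = t powr (- (\<tau> * real (degree Q)))"
    using t Q by (simp add: absT_poly_T powr_powr mult.commute)
  show ?thesis
  proof (cases "W = 0")
    case False
    then have "absT t (W / poly_T Q) = t powr (- (real_of_int (fls_subdegree W) + real (degree Q)))"
      using \<open>poly_T Q \<noteq> 0\<close> by (simp add: absT_def fls_divide_subdegree fls_subdegree_poly_T)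
    then show ?thesis
      using False t unfolding approx bound W_def[symmetric]
      by (simp add: powr_less_cancel_iff algebra_simps)
  qed (use t Q in \<open>simp add: approx bound W_def[symmetric] absT_def\<close>)
qed

lemma approx_pair_cross_eq:
  fixes f :: "F3 fls" and P Q p q :: "F3 poly"
  defines "W \<equiv> poly_T Q * f - poly_T P" and "E \<equiv> poly_T q * f - poly_T p"
  assumes W: "W = 0 \<or> int (degree q) < fls_subdegree W"
    and E: "E = 0 \<or> int (degree Q) < fls_subdegree E"
  shows "p * Q = P * q"
proof (rule ccontr)
  define D where "D = p * Q - P * q"
  assume "p * Q \<noteq> P * q"
  then have "D \<noteq> 0"
    by (simp add: D_def)
  have "poly_T D = poly_T q * W - poly_T Q * E"
    by (simp add: D_def W_def E_def poly_T_diff poly_T_mult algebra_simps)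
  moreover have "(poly_T q * W) $$ (- int (degree D)) = 0"
    using W by (auto intro: nth_poly_T_mult_eq_0)
  moreover have "(poly_T Q * E) $$ (- int (degree D)) = 0"
    using E by (auto intro: nth_poly_T_mult_eq_0)
  ultimately have "lead_coeff D = 0"
    by (simp flip: poly_T_nth_degree)
  then show False
    using \<open>D \<noteq> 0\<close> by simp
qed

lemma approx_pair_multiple:
  fixes f :: "F3 fls" and P Q p q :: "F3 poly"
  defines "W \<equiv> poly_T Q * f - poly_T P" and "E \<equiv> poly_T q * f - poly_T p"
  assumes "Q \<noteq> 0" and "coprime q p"
    and W: "W = 0 \<or> int (degree q) < fls_subdegree W"
    and E: "E = 0 \<or> int (degree Q) < fls_subdegree E"
  shows "\<exists>c. Q = q * c \<and> W = poly_T c * E"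
proof -
  have cross: "p * Q = P * q"
    using W E unfolding W_def E_def by (rule approx_pair_cross_eq)
  then have "q dvd p * Q"
    by simp
  then have "q dvd Q"
    using coprime_dvd_mult_right_iff[OF \<open>coprime q p\<close>] by simp
  then obtain c where c: "Q = q * c" ..
  then have "q \<noteq> 0"
    using \<open>Q \<noteq> 0\<close> by auto
  have "poly_T q * W - poly_T Q * E = poly_T (p * Q - P * q)"
    by (simp add: W_def E_def poly_T_diff poly_T_mult algebra_simps)
  also have "\<dots> = 0"
    using cross by simp
  finally have "poly_T q * W = poly_T q * (poly_T c * E)"
    by (simp add: c poly_T_mult mult.assoc)
  then have "W = poly_T c * E"
    using \<open>q \<noteq> 0\<close> by simp
  with c show ?thesis by blast
qed

lemma degree_num_le_degree_den:
  fixes f :: "F3 fls" and P Q :: "F3 poly"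
  defines "W \<equiv> poly_T Q * f - poly_T P"
  assumes "0 \<le> fls_subdegree f" and W: "W = 0 \<or> 0 < fls_subdegree W"
  shows "degree P \<le> degree Q"
proof (rule ccontr)
  assume deg: "\<not> degree P \<le> degree Q"
  then have "P \<noteq> 0"
    by auto
  define m where "m = - int (degree P)"
  have "poly_T P = poly_T Q * f - W"
    by (simp add: W_def)
  then have "lead_coeff P = (poly_T Q * f) $$ m - W $$ m"
    by (simp add: m_def flip: poly_T_nth_degree)
  also have "(poly_T Q * f) $$ m = 0"
    using deg \<open>0 \<le> fls_subdegree f\<close> by (intro nth_poly_T_mult_eq_0) (simp add: m_def)
  also have "W $$ m = 0"
    using W by (auto simp: m_def intro: fls_eq0_below_subdegree)
  finally show False
    using \<open>P \<noteq> 0\<close> by simp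
qed

lemma finite_degree_le: "finite {p :: 'a::{zero, finite} poly. degree p \<le> n}"
proof -
  have "{p :: 'a poly. degree p \<le> n} \<subseteq> Poly ` {xs. set xs \<subseteq> UNIV \<and> length xs \<le> Suc n}"
  proof
    fix p :: "'a poly"
    assume "p \<in> {p. degree p \<le> n}"
    then have "length (coeffs p) \<le> Suc n"
      by (cases "p = 0") (simp_all add: length_coeffs_degree)
    then show "p \<in> Poly ` {xs. set xs \<subseteq> UNIV \<and> length xs \<le> Suc n}"
      by (intro image_eqI[of _ _ "coeffs p"]) simp_all
  qed
  moreover have "finite {xs :: 'a list. set xs \<subseteq> UNIV \<and> length xs \<le> Suc n}"
    by (rule finite_lists_length_le) simp
  ultimately show ?thesis
    by (meson finite_imageI finite_subset)
qed

definition good_approxs :: "real \<Rightarrow> F3 fls \<Rightarrow> real \<Rightarrow> (F3 poly \<times> F3 poly) set" where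
  "good_approxs t f \<tau> =
    {(P, Q). Q \<noteq> 0 \<and> absT t (f - poly_T P / poly_T Q) < absT t (poly_T Q) powr (- \<tau>)}"

lemma mem_good_approxs_iff:
  assumes "1 < t"
  shows "(P, Q) \<in> good_approxs t f \<tau> \<longleftrightarrow> Q \<noteq> 0 \<and>
    (poly_T Q * f - poly_T P = 0 \<or>
     (\<tau> - 1) * real (degree Q) < real_of_int (fls_subdegree (poly_T Q * f - poly_T P)))"
  using absT_approx_less_iff[OF assms] by (auto simp: good_approxs_def)

lemma irr_exp_le:
  assumes "\<And>\<tau>. x < \<tau> \<Longrightarrow> finite (good_approxs t f \<tau>)"
  shows "irr_exp t f \<le> ereal x"
  unfolding irr_exp_def good_approxs_def[symmetric]
  by (intro Sup_least) (use assms in \<open>force simp: not_less[symmetric]\<close>)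

lemma irr_exp_ge:
  assumes "\<And>\<tau>. \<tau> < x \<Longrightarrow> infinite (good_approxs t f \<tau>)"
  shows "ereal x \<le> irr_exp t f"
  unfolding irr_exp_def good_approxs_def[symmetric]
proof (rule dense_le)
  fix y :: ereal
  assume "y < ereal x"
  then show "y \<le> Sup (ereal ` {\<tau>. infinite (good_approxs t f \<tau>)})"
  proof (cases y)
    case (real r)
    then have "infinite (good_approxs t f r)"
      using \<open>y < ereal x\<close> assms by simp
    then show ?thesis
      unfolding real by (intro Sup_upper) simp
  qed auto
qed

lemma exists_pow3_bracket: "10 \<le> (d::nat) \<Longrightarrow> \<exists>k. 10 * 3 ^ k \<le> d \<and> d < 30 * 3 ^ k"
proof (induct d rule: less_induct)
  case (less d)
  show ?case
  proof (cases "d < 30")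
    case False
    then have "10 \<le> d div 3" "d div 3 < d"
      by auto
    then obtain k where "10 * 3 ^ k \<le> d div 3" "d div 3 < 30 * 3 ^ k"
      using less.hyps by blast
    moreover have "d = d div 3 * 3 + d mod 3" "d mod 3 < 3"
      by simp_all
    ultimately have "10 * 3 ^ Suc k \<le> d \<and> d < 30 * 3 ^ Suc k"
      unfolding power_Suc by linarith
    then show ?thesis ..
  qed (use less.prems in \<open>intro exI[of _ 0], simp\<close>)
qed

lemma degree_lt_10_if_good_approx:
  fixes P Q :: "F3 poly" and \<tau> :: real
  defines "W \<equiv> poly_T Q * f_a - poly_T P"
  assumes "Q \<noteq> 0" and "14 / 5 < \<tau>"
    and W: "W = 0 \<or> (\<tau> - 1) * real (degree Q) < real_of_int (fls_subdegree W)"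
  shows "degree Q < 10"
proof (rule ccontr)
  define d where "d = degree Q"
  assume "\<not> degree Q < 10"
  then obtain k where k: "10 * 3 ^ k \<le> d" "d < 30 * 3 ^ k"
    using exists_pow3_bracket unfolding d_def by (meson not_less)
  then have "0 < d"
    using less_le_trans[of 0 "10 * 3 ^ k" d] by simp
  define N :: nat where "N = 6 * 3 ^ Suc k"
  have E: "approx_err N \<noteq> 0" "fls_subdegree (approx_err N) = 30 * 3 ^ k"
    using approx_err_six_pow3[of "Suc k"] by (simp_all add: N_def)
  have deg_den: "degree (approx_den N) = 18 * 3 ^ k"
    by (simp add: N_def degree_approx_den)
  have "real (18 * 3 ^ k) < (\<tau> - 1) * d"
  proof -
    have "real (18 * 3 ^ k) \<le> 9 / 5 * d"
      using k(1) by (simp add: of_nat_le_iff[symmetric, where 'a=real])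
    also have "\<dots> < (\<tau> - 1) * d"
      using \<open>14 / 5 < \<tau>\<close> \<open>0 < d\<close> by (intro mult_strict_right_mono) auto
    finally show ?thesis .
  qed
  then have "W = 0 \<or> int (degree (approx_den N)) < fls_subdegree W"
    using W unfolding deg_den d_def by linarith
  moreover have "int d < int (30 * 3 ^ k)"
    using k(2) by (simp only: of_nat_less_iff)
  then have "approx_err N = 0 \<or> int d < fls_subdegree (approx_err N)"
    using E by simp
  ultimately obtain c where c: "Q = approx_den N * c" and Wc: "W = poly_T c * approx_err N"
    using approx_pair_multiple[OF \<open>Q \<noteq> 0\<close> coprime_approx_den_num[of "Suc k"]]
    unfolding W_def d_def approx_err_def N_def by blast
  have "c \<noteq> 0"
    using c \<open>Q \<noteq> 0\<close> by auto
  then have deg_c: "d = 18 * 3 ^ k + degree c"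
    using c deg_den \<open>Q \<noteq> 0\<close> unfolding d_def by (simp add: degree_mult_eq)
  have "W \<noteq> 0" "real_of_int (fls_subdegree W) = 30 * 3 ^ k - real (degree c)"
    using Wc E \<open>c \<noteq> 0\<close> by (simp_all add: fls_subdegree_poly_T)
  then have "\<tau> * d - d < 30 * 3 ^ k - real (degree c)"
    using W unfolding d_def by (simp add: left_diff_distrib)
  moreover have "real d = 18 * 3 ^ k + real (degree c)"
    using deg_c by simp
  ultimately have "\<tau> * d < 48 * 3 ^ k"
    by linarith
  moreover have "14 / 5 * d < \<tau> * d"
    using \<open>14 / 5 < \<tau>\<close> \<open>0 < d\<close> by (intro mult_strict_right_mono) auto
  moreover have "18 * 3 ^ k \<le> real d"
    using deg_c by simp
  ultimately show False
    by linarith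
qed

lemma finite_good_approxs_f_a:
  assumes t: "1 < t" and "14 / 5 < \<tau>"
  shows "finite (good_approxs t f_a \<tau>)"
proof (rule finite_subset)
  show "good_approxs t f_a \<tau> \<subseteq> {p. degree p \<le> 9} \<times> {p. degree p \<le> 9}"
  proof (rule subsetI)
    fix x
    assume "x \<in> good_approxs t f_a \<tau>"
    then obtain P Q where x: "x = (P, Q)" and "(P, Q) \<in> good_approxs t f_a \<tau>"
      by (cases x) simp
    then have "Q \<noteq> 0" and W: "poly_T Q * f_a - poly_T P = 0 \<or>
        (\<tau> - 1) * real (degree Q) < real_of_int (fls_subdegree (poly_T Q * f_a - poly_T P))"
      unfolding mem_good_approxs_iff[OF t] by blast+
    have "degree Q < 10"
      using \<open>Q \<noteq> 0\<close> \<open>14 / 5 < \<tau>\<close> W by (rule degree_lt_10_if_good_approx)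
    moreover have "0 \<le> (\<tau> - 1) * real (degree Q)"
      using \<open>14 / 5 < \<tau>\<close> by simp
    then have "degree P \<le> degree Q"
      using W by (intro degree_num_le_degree_den) (auto simp: f_a_def fls_subdegree_fls_to_fps_gt0)
    ultimately show "x \<in> {p. degree p \<le> 9} \<times> {p. degree p \<le> 9}"
      by (simp add: x)
  qed
  show "finite ({p :: F3 poly. degree p \<le> 9} \<times> {p :: F3 poly. degree p \<le> 9})"
    by (intro finite_cartesian_product finite_degree_le)
qed

lemma infinite_good_approxs_f_a:
  assumes t: "1 < t" and "\<tau> < 8 / 3"
  shows "infinite (good_approxs t f_a \<tau>)"
proof -
  define g where "g k = (approx_num (6 * 3 ^ k), approx_den (6 * 3 ^ k))" for k :: nat
  have "inj g"
  proof (rule injI)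
    fix k l
    assume "g k = g l"
    then have "degree (approx_den (6 * 3 ^ k)) = degree (approx_den (6 * 3 ^ l))"
      by (simp add: g_def)
    then show "k = l"
      by (simp add: degree_approx_den)
  qed
  moreover have "g k \<in> good_approxs t f_a \<tau>" for k
  proof -
    have "(\<tau> - 1) * real (6 * 3 ^ k) < real (10 * 3 ^ k)"
      using \<open>\<tau> < 8 / 3\<close> by simp
    then show ?thesis
      using approx_err_six_pow3[of k]
      by (simp add: g_def mem_good_approxs_iff[OF t] approx_den_nonzero degree_approx_den
          flip: approx_err_def)
  qed
  ultimately show ?thesis
    by (meson infinite_super image_subsetI range_inj_infinite infinite_UNIV_nat)
qed

theorem proposition5p7:
  fixes t :: real
  assumes "t > 1"
  shows "ereal 2.66 \<le> irr_exp t f_a \<and> irr_exp t f_a \<le> ereal 2.81"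
proof
  have "ereal 2.66 \<le> ereal (8 / 3)"
    by simp
  also have "\<dots> \<le> irr_exp t f_a"
    using infinite_good_approxs_f_a[OF assms] by (rule irr_exp_ge)
  finally show "ereal 2.66 \<le> irr_exp t f_a" .
  have "irr_exp t f_a \<le> ereal (14 / 5)"
    using finite_good_approxs_f_a[OF assms] by (rule irr_exp_le)
  also have "\<dots> \<le> ereal 2.81"
    by simp
  finally show "irr_exp t f_a \<le> ereal 2.81" .
qed

end
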